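(* Let $k\in\mathbb Z^+$, let $M$ be a matroid and let $N$ be a minor of $M$ such that $\mathcal T_k(N)$ is a tangle (of order $k$ on $N$). If $X\subseteq E(M)$ is contained in a $\mathcal T_k(M,N)$-small set, then there is a minor $M'$ of $M$ such that $M'|X=M|X$, $M'$ has $N$ as a minor, and $X$ is contained in a $\mathcal T_k(M',N)$-small set $X'$ such that $E(M')=E(N)\cup X'$ and $\lambda_{M'}(X')=\kappa_{\mathcal T_k(M',N)}(X)=\kappa_{\mathcal T_k(M,N)}(X)$.
   Context: For a matroid $M$ and $X\subseteq E(M)$, $\lambda_M(X)=r_M(X)+r_M(E(M)-X)-r(M)$; $X$ is $k$-separating if $\lambda_M(X)<k$. A collection $\mathcal T$ of subsets of $E(M)$ is a tangle of order $\theta$ if: (i) every set in $\mathcal T$ is $(\theta-1)$-separating, and for each $(\theta-1)$-separating set $X$, either $X\in\mathcal T$ or $E(M)-X\in\mathcal T$; (ii) no three sets in $\mathcal T$ have union $E(M)$; (iii) $E(M)-\{e\}\notin\mathcal T$ for each $e\in E(M)$. Sets in $\mathcal T$ are called $\mathcal T$-small. For a tangle $\mathcal T$ of order $\theta$ and $X\subseteq E(M)$, $\kappa_{\mathcal T}(X)=\theta-1$ if $X$ is contained in no $\mathcal T$-small set, and $\kappa_{\mathcal T}(X)=\min\{\lambda_M(Z): X\subseteq Z\in\mathcal T\}$ otherwise. $\mathcal T_k(N)$ is the collection of $(k-1)$-separating subsets of $E(N)$ that are neither spanning nor cospanning in $N$. If $N$ is a minor of $M$ and $\mathcal T_k(N)$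 is a tangle of order $k$ on $N$, then $\mathcal T_k(M,N)=\{X\subseteq E(M):\lambda_M(X)<k-1,\ X\cap E(N)\in\mathcal T_k(N)\}$, which is a tangle of order $k$ on $M$ (the tangle induced by $\mathcal T_k(N)$). *)

theory Defs
  imports Main
begin

text \<open>A matroid is given by its (finite) ground set and its rank function;
 only the values of the rank function on subsets of the ground set matter.\<close>

record 'a matroid =
  ground :: "'a set"
  rk :: "'a set \<Rightarrow> nat"

definition matroid :: "'a matroid \<Rightarrow> bool" where
  "matroid M \<longleftrightarrow> finite (ground M)
    \<and> (\<forall>X. X \<subseteq> ground M \<longrightarrow> rk M X \<le> card X)
    \<and> (\<forall>X Y. X \<subseteq> Y \<and> Y \<subseteq> ground M \<longrightarrow> rk M X \<le> rk M Y)
    \<and> (\<forall>X Y. X \<subseteq> ground M \<and> Y \<subseteq> ground M \<longrightarrow>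
          rk M (X \<union> Y) + rk M (X \<inter> Y) \<le> rk M X + rk M Y)"

definition is_minor :: "'a matroid \<Rightarrow> 'a matroid \<Rightarrow> bool" where
  "is_minor N M \<longleftrightarrow> (\<exists>C D. C \<subseteq> ground M \<and> D \<subseteq> ground M \<and> C \<inter> D = {}
     \<and> ground N = ground M - (C \<union> D)
     \<and> (\<forall>X. X \<subseteq> ground N \<longrightarrow> rk N X = rk M (X \<union> C) - rk M C))"

definition same_restriction :: "'a matroid \<Rightarrow> 'a matroid \<Rightarrow> 'a set \<Rightarrow> bool" where
  "same_restriction M' M X \<longleftrightarrow> X \<subseteq> ground M' \<and> X \<subseteq> ground M
     \<and> (\<forall>Y. Y \<subseteq> X \<longrightarrow> rk M' Y = rk M Y)"

definition conn :: "'a matroid \<Rightarrow> 'a set \<Rightarrow> nat" where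
  "conn M X = rk M X + rk M (ground M - X) - rk M (ground M)"

definition separating :: "'a matroid \<Rightarrow> nat \<Rightarrow> 'a set \<Rightarrow> bool" where
  "separating M k X \<longleftrightarrow> X \<subseteq> ground M \<and> conn M X < k"

definition spanning :: "'a matroid \<Rightarrow> 'a set \<Rightarrow> bool" where
  "spanning M X \<longleftrightarrow> rk M X = rk M (ground M)"

definition dual_rk :: "'a matroid \<Rightarrow> 'a set \<Rightarrow> nat" where
  "dual_rk M X = card X + rk M (ground M - X) - rk M (ground M)"

definition cospanning :: "'a matroid \<Rightarrow> 'a set \<Rightarrow> bool" where
  "cospanning M X \<longleftrightarrow> dual_rk M X = dual_rk M (ground M)"

definition tangle :: "'a matroid \<Rightarrow> nat \<Rightarrow> 'a set set \<Rightarrow> bool" where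
  "tangle M \<theta> T \<longleftrightarrow>
     (\<forall>X\<in>T. separating M (\<theta> - 1) X)
   \<and> (\<forall>X. separating M (\<theta> - 1) X \<longrightarrow> X \<in> T \<or> ground M - X \<in> T)
   \<and> (\<forall>A\<in>T. \<forall>B\<in>T. \<forall>C\<in>T. A \<union> B \<union> C \<noteq> ground M)
   \<and> (\<forall>e\<in>ground M. ground M - {e} \<notin> T)"

definition kappa :: "'a matroid \<Rightarrow> nat \<Rightarrow> 'a set set \<Rightarrow> 'a set \<Rightarrow> nat" where
  "kappa M \<theta> T X = (if \<not> (\<exists>Z\<in>T. X \<subseteq> Z) then \<theta> - 1
      else Min {conn M Z | Z. Z \<in> T \<and> X \<subseteq> Z})"

definition Tk :: "nat \<Rightarrow> 'a matroid \<Rightarrow> 'a set set" where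
  "Tk k N = {X. separating N (k - 1) X \<and> \<not> spanning N X \<and> \<not> cospanning N X}"

definition TkMN :: "nat \<Rightarrow> 'a matroid \<Rightarrow> 'a matroid \<Rightarrow> 'a set set" where
  "TkMN k M N = {X. X \<subseteq> ground M \<and> conn M X < k - 1 \<and> X \<inter> ground N \<in> Tk k N}"

end

theory Submission
  imports Defs
begin

text \<open>Among the \<open>\<T>\<^sub>k(M,N)\<close>-small sets containing \<open>X\<close> with \<open>\<lambda> = \<kappa>(X)\<close>, take one, \<open>a\<close>,
  of maximum size. Uncrossing with the submodularity of \<open>\<lambda>\<close> shows that every small set
  \<open>B \<supseteq> X\<close> with \<open>\<lambda>(B) \<le> \<kappa>(X)\<close> lies inside \<open>a\<close>. Hence any element \<open>e \<notin> E(N) \<union> a\<close>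
  satisfies \<open>\<lambda>(a \<union> e) > \<lambda>(a)\<close>, so \<open>e\<close> is neither spanned by \<open>a\<close> nor a coloop of
  \<open>M | (E - a)\<close>. Removing \<open>e\<close> (by contraction or deletion, as in the passage from \<open>M\<close>
  to \<open>N\<close>) keeps \<open>M|a\<close>, lowers \<open>\<lambda>\<close> of sets by at most one, and therefore preserves
  \<open>\<kappa>(X)\<close>; induction on \<open>|E(M)|\<close> ends when \<open>E(M) = E(N) \<union> a\<close>.\<close>

subsection \<open>Rank functions\<close>

lemma matroid_finite_ground: "matroid M \<Longrightarrow> finite (ground M)"
  unfolding matroid_def by blast

lemma rk_le_card: "matroid M \<Longrightarrow> X \<subseteq> ground M \<Longrightarrow> rk M X \<le> card X"
  unfolding matroid_def by blast

lemma rk_mono: "matroid M \<Longrightarrow> X \<subseteq> Y \<Longrightarrow> Y \<subseteq> ground M \<Longrightarrow> rk M X \<le> rk M Y"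
  unfolding matroid_def by blast

lemma rk_submod:
  "matroid M \<Longrightarrow> X \<subseteq> ground M \<Longrightarrow> Y \<subseteq> ground M \<Longrightarrow>
    rk M (X \<union> Y) + rk M (X \<inter> Y) \<le> rk M X + rk M Y"
  unfolding matroid_def by blast

lemma rk_empty: "matroid M \<Longrightarrow> rk M {} = 0"
  using rk_le_card[of M "{}"] by simp

lemma rk_Un_le:
  "matroid M \<Longrightarrow> X \<subseteq> ground M \<Longrightarrow> Y \<subseteq> ground M \<Longrightarrow> rk M (X \<union> Y) \<le> rk M X + rk M Y"
  using rk_submod[of M X Y] by linarith

lemma rk_Un_singleton_le:
  assumes "matroid M" "X \<subseteq> ground M" "e \<in> ground M"
  shows "rk M (X \<union> {e}) \<le> rk M X + 1"
  using rk_Un_le[of M X "{e}"] rk_le_card[of M "{e}"] assms by simp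

subsection \<open>Minors\<close>

lemma is_minorE:
  assumes "is_minor N M"
  obtains C D where "C \<subseteq> ground M" "D \<subseteq> ground M" "C \<inter> D = {}"
    "ground N = ground M - (C \<union> D)"
    "\<And>Y. Y \<subseteq> ground N \<Longrightarrow> rk N Y = rk M (Y \<union> C) - rk M C"
  using assms unfolding is_minor_def by (elim exE conjE) (rule that; simp)

lemma is_minorI:
  assumes "C \<subseteq> ground M" "D \<subseteq> ground M" "C \<inter> D = {}"
    "ground N = ground M - (C \<union> D)"
    "\<And>Y. Y \<subseteq> ground N \<Longrightarrow> rk N Y = rk M (Y \<union> C) - rk M C"
  shows "is_minor N M"
  unfolding is_minor_def using assms by blast

lemma ground_minor_subset: "is_minor N M \<Longrightarrow> ground N \<subseteq> ground M"
  by (erule is_minorE) blast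

definition contract :: "'a matroid \<Rightarrow> 'a \<Rightarrow> 'a matroid" where
  "contract M e = \<lparr>ground = ground M - {e}, rk = (\<lambda>Y. rk M (Y \<union> {e}) - rk M {e})\<rparr>"

definition delete :: "'a matroid \<Rightarrow> 'a \<Rightarrow> 'a matroid" where
  "delete M e = \<lparr>ground = ground M - {e}, rk = rk M\<rparr>"

lemma ground_contract [simp]: "ground (contract M e) = ground M - {e}"
  and rk_contract: "rk (contract M e) Y = rk M (Y \<union> {e}) - rk M {e}"
  unfolding contract_def by simp_all

lemma ground_delete [simp]: "ground (delete M e) = ground M - {e}"
  and rk_delete [simp]: "rk (delete M e) = rk M"
  unfolding delete_def by simp_all

lemma rk_contract_plus:
  assumes "matroid M" "e \<in> ground M" "Y \<subseteq> ground M"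
  shows "rk (contract M e) Y + rk M {e} = rk M (Y \<union> {e})"
  using rk_mono[of M "{e}" "Y \<union> {e}"] assms by (simp add: rk_contract)

lemma matroid_contract:
  assumes M: "matroid M" and e: "e \<in> ground M"
  shows "matroid (contract M e)"
  unfolding matroid_def
proof (intro conjI allI impI)
  show "finite (ground (contract M e))" using matroid_finite_ground[OF M] by simp
next
  fix X assume "X \<subseteq> ground (contract M e)"
  then have X: "X \<subseteq> ground M" by auto
  show "rk (contract M e) X \<le> card X"
    using rk_Un_le[OF M X, of "{e}"] rk_le_card[OF M X] e by (simp add: rk_contract)
next
  fix X Y assume "X \<subseteq> Y \<and> Y \<subseteq> ground (contract M e)"
  then have "rk M (X \<union> {e}) \<le> rk M (Y \<union> {e})"
    using rk_mono[OF M, of "X \<union> {e}" "Y \<union> {e}"] e by auto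
  then show "rk (contract M e) X \<le> rk (contract M e) Y" by (simp add: rk_contract diff_le_mono)
next
  fix X Y assume "X \<subseteq> ground (contract M e) \<and> Y \<subseteq> ground (contract M e)"
  then have X: "X \<subseteq> ground M" and Y: "Y \<subseteq> ground M" by auto
  have "(X \<union> {e}) \<union> (Y \<union> {e}) = (X \<union> Y) \<union> {e}" "(X \<union> {e}) \<inter> (Y \<union> {e}) = (X \<inter> Y) \<union> {e}"
    by blast+
  then have "rk M ((X \<union> Y) \<union> {e}) + rk M ((X \<inter> Y) \<union> {e}) \<le> rk M (X \<union> {e}) + rk M (Y \<union> {e})"
    using rk_submod[OF M, of "X \<union> {e}" "Y \<union> {e}"] X Y e by simp
  then show "rk (contract M e) (X \<union> Y) + rk (contract M e) (X \<inter> Y)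
      \<le> rk (contract M e) X + rk (contract M e) Y"
    using rk_contract_plus[OF M e, of "X \<union> Y"] rk_contract_plus[OF M e, of "X \<inter> Y"]
      rk_contract_plus[OF M e, of X] rk_contract_plus[OF M e, of Y] X Y by fastforce
qed

lemma matroid_delete:
  assumes M: "matroid M"
  shows "matroid (delete M e)"
  unfolding matroid_def ground_delete rk_delete
proof (intro conjI allI impI)
  show "finite (ground M - {e})" using matroid_finite_ground[OF M] by simp
qed (use rk_le_card[OF M] rk_mono[OF M] rk_submod[OF M] in \<open>meson Diff_subset order_trans\<close>)+

lemma is_minor_contract: "e \<in> ground M \<Longrightarrow> is_minor (contract M e) M"
  by (rule is_minorI[of "{e}" M "{}"]) (auto simp: rk_contract)

lemma is_minor_delete: "matroid M \<Longrightarrow> e \<in> ground M \<Longrightarrow> is_minor (delete M e) M"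
  by (rule is_minorI[of "{}" M "{e}"]) (auto simp: rk_empty)

lemma is_minor_refl: "matroid M \<Longrightarrow> is_minor M M"
  by (rule is_minorI[of "{}" M "{}"]) (auto simp: rk_empty)

lemma is_minor_trans:
  assumes M: "matroid M" and m1: "is_minor M1 M" and m2: "is_minor M2 M1"
  shows "is_minor M2 M"
proof -
  obtain C1 D1 where C1: "C1 \<subseteq> ground M" "D1 \<subseteq> ground M" "C1 \<inter> D1 = {}"
    and g1: "ground M1 = ground M - (C1 \<union> D1)"
    and r1: "\<And>Y. Y \<subseteq> ground M1 \<Longrightarrow> rk M1 Y = rk M (Y \<union> C1) - rk M C1"
    using is_minorE[OF m1] by metis
  obtain C2 D2 where C2: "C2 \<subseteq> ground M1" "D2 \<subseteq> ground M1" "C2 \<inter> D2 = {}"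
    and g2: "ground M2 = ground M1 - (C2 \<union> D2)"
    and r2: "\<And>Y. Y \<subseteq> ground M2 \<Longrightarrow> rk M2 Y = rk M1 (Y \<union> C2) - rk M1 C2"
    using is_minorE[OF m2] by metis
  show ?thesis
  proof (rule is_minorI[of "C1 \<union> C2" M "D1 \<union> D2"])
    show "C1 \<union> C2 \<subseteq> ground M" "D1 \<union> D2 \<subseteq> ground M" "(C1 \<union> C2) \<inter> (D1 \<union> D2) = {}"
      "ground M2 = ground M - (C1 \<union> C2 \<union> (D1 \<union> D2))"
      using C1 g1 C2 g2 by blast+
  next
    fix Y assume Y: "Y \<subseteq> ground M2"
    have YC: "Y \<union> C2 \<subseteq> ground M1" "Y \<union> (C1 \<union> C2) \<subseteq> ground M" using Y C1 C2 g1 g2 by blast+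
    have "rk M1 (Y \<union> C2) = rk M (Y \<union> (C1 \<union> C2)) - rk M C1"
      using r1[OF YC(1)] by (simp add: Un_ac)
    moreover have "rk M1 C2 = rk M (C1 \<union> C2) - rk M C1"
      using r1[OF C2(1)] by (simp add: Un_ac)
    moreover have "rk M C1 \<le> rk M (C1 \<union> C2)"
      by (rule rk_mono[OF M]) (use YC(2) in blast)+
    moreover have "rk M (C1 \<union> C2) \<le> rk M (Y \<union> (C1 \<union> C2))"
      by (rule rk_mono[OF M]) (use YC(2) in blast)+
    ultimately show "rk M2 Y = rk M (Y \<union> (C1 \<union> C2)) - rk M (C1 \<union> C2)"
      using r2[OF Y] by simp
  qed
qed

lemma is_minor_contract_or_delete:
  assumes M: "matroid M" and mn: "is_minor N M" and e: "e \<in> ground M" "e \<notin> ground N"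
  obtains "is_minor N (contract M e)" | "is_minor N (delete M e)"
proof -
  obtain C D where C: "C \<subseteq> ground M" "D \<subseteq> ground M" "C \<inter> D = {}"
    and gN: "ground N = ground M - (C \<union> D)"
    and rN: "\<And>Y. Y \<subseteq> ground N \<Longrightarrow> rk N Y = rk M (Y \<union> C) - rk M C"
    using is_minorE[OF mn] by metis
  consider "e \<in> C" | "e \<in> D" using e gN by blast
  then show thesis
  proof cases
    case 1
    have "is_minor N (contract M e)"
    proof (rule is_minorI[of "C - {e}" _ D])
      show "C - {e} \<subseteq> ground (contract M e)" "D \<subseteq> ground (contract M e)" "(C - {e}) \<inter> D = {}"
        "ground N = ground (contract M e) - (C - {e} \<union> D)"
        using C gN 1 by auto
    next
      fix Y assume Y: "Y \<subseteq> ground N"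
      have "Y \<union> (C - {e}) \<union> {e} = Y \<union> C" "C - {e} \<union> {e} = C" using 1 by blast+
      moreover have "rk M {e} \<le> rk M C"
        by (rule rk_mono[OF M]) (use C 1 in blast)+
      moreover have "rk M C \<le> rk M (Y \<union> C)"
        by (rule rk_mono[OF M]) (use C Y gN in blast)+
      ultimately show "rk N Y = rk (contract M e) (Y \<union> (C - {e})) - rk (contract M e) (C - {e})"
        using rN[OF Y] by (simp add: rk_contract)
    qed
    then show thesis by (rule that)
  next
    case 2
    have "is_minor N (delete M e)"
    proof (rule is_minorI[of C _ "D - {e}"])
      show "C \<subseteq> ground (delete M e)" "D - {e} \<subseteq> ground (delete M e)" "C \<inter> (D - {e}) = {}"
        "ground N = ground (delete M e) - (C \<union> (D - {e}))"
        using C gN 2 by auto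
    qed (simp add: rN)
    then show thesis by (rule that)
  qed
qed

lemma same_restriction_refl: "X \<subseteq> ground M \<Longrightarrow> same_restriction M M X"
  unfolding same_restriction_def by simp

lemma same_restriction_trans:
  "same_restriction M' M1 X \<Longrightarrow> same_restriction M1 M X \<Longrightarrow> same_restriction M' M X"
  unfolding same_restriction_def by simp

lemma same_restriction_subset:
  "same_restriction M' M A \<Longrightarrow> X \<subseteq> A \<Longrightarrow> same_restriction M' M X"
  unfolding same_restriction_def by blast

text \<open>If \<open>e\<close> is not spanned by \<open>A\<close>, then it is spanned by no subset of \<open>A\<close> either, so
  contracting \<open>e\<close> does not change \<open>M|A\<close>.\<close>
lemma same_restriction_contract:
  assumes M: "matroid M" and e: "e \<in> ground M" and A: "A \<subseteq> ground M" "e \<notin> A"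
    and rA: "rk M (A \<union> {e}) = rk M A + 1"
  shows "same_restriction (contract M e) M A"
  unfolding same_restriction_def
proof (intro conjI allI impI)
  show "A \<subseteq> ground (contract M e)" "A \<subseteq> ground M" using A by auto
  have re: "rk M {e} = 1"
    using rk_submod[OF M A(1), of "{e}"] rk_le_card[OF M, of "{e}"] rk_empty[OF M] rA e A(2)
    by (simp add: disjoint_iff)
  fix Y assume Y: "Y \<subseteq> A"
  have "(Y \<union> {e}) \<union> A = A \<union> {e}" "(Y \<union> {e}) \<inter> A = Y" using Y A by blast+
  then have "rk M Y + 1 \<le> rk M (Y \<union> {e})"
    using rk_submod[OF M, of "Y \<union> {e}" A] rA Y A e by simp
  moreover have "rk M (Y \<union> {e}) \<le> rk M Y + 1" using rk_Un_singleton_le[OF M, of Y e] Y A e by blast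
  ultimately show "rk (contract M e) Y = rk M Y" using re by (simp add: rk_contract)
qed

lemma same_restriction_delete: "A \<subseteq> ground M \<Longrightarrow> e \<notin> A \<Longrightarrow> same_restriction (delete M e) M A"
  unfolding same_restriction_def by auto

subsection \<open>Connectivity\<close>

lemma conn_plus_rk_ground:
  assumes M: "matroid M" and A: "A \<subseteq> ground M"
  shows "conn M A + rk M (ground M) = rk M A + rk M (ground M - A)"
proof -
  have "A \<union> (ground M - A) = ground M" using A by blast
  then have "rk M (ground M) \<le> rk M A + rk M (ground M - A)"
    using rk_Un_le[OF M A, of "ground M - A"] by simp
  then show ?thesis unfolding conn_def by simp
qed

lemma conn_submod:
  assumes M: "matroid M" and A: "A \<subseteq> ground M" and B: "B \<subseteq> ground M"
  shows "conn M (A \<union> B) + conn M (A \<inter> B) \<le> conn M A + conn M B"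
proof -
  let ?E = "ground M"
  have "(?E - A) \<union> (?E - B) = ?E - (A \<inter> B)" "(?E - A) \<inter> (?E - B) = ?E - (A \<union> B)" by blast+
  then have compl: "rk M (?E - (A \<inter> B)) + rk M (?E - (A \<union> B)) \<le> rk M (?E - A) + rk M (?E - B)"
    using rk_submod[OF M, of "?E - A" "?E - B"] by simp
  have "A \<union> B \<subseteq> ?E" "A \<inter> B \<subseteq> ?E" using A B by blast+
  then show ?thesis
    using rk_submod[OF M A B] compl conn_plus_rk_ground[OF M A] conn_plus_rk_ground[OF M B]
      conn_plus_rk_ground[OF M \<open>A \<union> B \<subseteq> ?E\<close>] conn_plus_rk_ground[OF M \<open>A \<inter> B \<subseteq> ?E\<close>] by linarith
qed

text \<open>With \<open>N = M / C \ D\<close>, write \<open>A' = A - D\<close>, \<open>B' = E - A - D\<close>. Then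
  \<open>\<lambda>\<^sub>N(A \<inter> E(N)) = r(A' \<union> C) + r(B' \<union> C) - r(E - D) - r(C)\<close>, and submodularity
  bounds this by \<open>r(A') + r(B') - r(E - D) \<le> \<lambda>\<^sub>M(A)\<close>.\<close>
lemma conn_minor_le:
  assumes M: "matroid M" and mn: "is_minor N M" and A: "A \<subseteq> ground M"
  shows "conn N (A \<inter> ground N) \<le> conn M A"
proof -
  obtain C D where C: "C \<subseteq> ground M" and CD: "C \<inter> D = {}"
    and gN: "ground N = ground M - (C \<union> D)"
    and rN: "\<And>Y. Y \<subseteq> ground N \<Longrightarrow> rk N Y = rk M (Y \<union> C) - rk M C"
    using is_minorE[OF mn] by metis
  let ?E = "ground M" and ?r = "rk M"
  define A' where "A' = A - D"
  define B' where "B' = ?E - A - D"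
  have rk_N: "rk N Y + ?r C = ?r (Y' \<union> C)"
    if "Y \<subseteq> ground N" "Y' \<subseteq> ?E" "Y \<union> C = Y' \<union> C" for Y Y'
    using rN[OF that(1)] rk_mono[OF M, of C "Y' \<union> C"] that C by auto
  have rA: "rk N (A \<inter> ground N) + ?r C = ?r (A' \<union> C)"
    by (rule rk_N) (use A CD in \<open>auto simp: A'_def gN\<close>)
  have rB: "rk N (ground N - A \<inter> ground N) + ?r C = ?r (B' \<union> C)"
    by (rule rk_N) (use A C CD in \<open>auto simp: B'_def gN\<close>)
  have "(?E - D) \<union> C = ?E - D" using C CD by blast
  then have rE: "rk N (ground N) + ?r C = ?r (?E - D)"
    using rk_N[of "ground N" "?E - D"] C CD by (auto simp: gN)
  have sA: "?r (A' \<union> C) + ?r (A' \<inter> C) \<le> ?r A' + ?r C"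
    using rk_submod[OF M, of A' C] A C by (auto simp: A'_def)
  have sB: "?r (B' \<union> C) + ?r (B' \<inter> C) \<le> ?r B' + ?r C"
    using rk_submod[OF M, of B' C] C by (auto simp: B'_def)
  have "C = (A' \<inter> C) \<union> (B' \<inter> C)" using C CD A by (auto simp: A'_def B'_def)
  then have sC: "?r C \<le> ?r (A' \<inter> C) + ?r (B' \<inter> C)"
    using rk_Un_le[OF M, of "A' \<inter> C" "B' \<inter> C"] C by auto
  have "A \<inter> (?E - D) = A'" "A \<union> (?E - D) \<subseteq> ?E" using A by (auto simp: A'_def)
  then have sD: "?r A' + ?r (A \<union> (?E - D)) \<le> ?r A + ?r (?E - D)"
    using rk_submod[OF M, of A "?E - D"] A by auto
  have "(A \<union> (?E - D)) \<union> (?E - A) = ?E" "(A \<union> (?E - D)) \<inter> (?E - A) = B'"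
    using A by (auto simp: B'_def)
  then have sE: "?r ?E + ?r B' \<le> ?r (A \<union> (?E - D)) + ?r (?E - A)"
    using rk_submod[OF M, of "A \<union> (?E - D)" "?E - A"] A by auto
  have "rk N (A \<inter> ground N) + rk N (ground N - A \<inter> ground N) \<le> rk N (ground N) + conn M A"
    using rA rB rE sA sB sC sD sE conn_plus_rk_ground[OF M A] by linarith
  then show ?thesis unfolding conn_def by linarith
qed

lemma conn_Un_singleton_le_conn_contract:
  assumes M: "matroid M" and e: "e \<in> ground M" and b: "b \<subseteq> ground M - {e}"
  shows "conn M (b \<union> {e}) \<le> conn (contract M e) b + 1"
proof -
  let ?E = "ground M" and ?M' = "contract M e"
  have sets: "?E - {e} \<subseteq> ?E" "?E - {e} - b \<subseteq> ?E" "b \<subseteq> ?E" "b \<union> {e} \<subseteq> ?E"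
    "(?E - {e}) \<union> {e} = ?E" "(?E - {e} - b) \<union> {e} = ?E - b" using e b by blast+
  have "conn ?M' b + rk ?M' (?E - {e}) = rk ?M' b + rk ?M' (?E - {e} - b)"
    using conn_plus_rk_ground[OF matroid_contract[OF M e], of b] b by simp
  moreover have "rk ?M' (?E - {e}) + rk M {e} = rk M ?E"
    using rk_contract_plus[OF M e sets(1)] unfolding sets(5) .
  moreover have "rk ?M' (?E - {e} - b) + rk M {e} = rk M (?E - b)"
    using rk_contract_plus[OF M e sets(2)] unfolding sets(6) .
  moreover have "rk ?M' b + rk M {e} = rk M (b \<union> {e})" using rk_contract_plus[OF M e sets(3)] .
  moreover have "conn M (b \<union> {e}) + rk M ?E = rk M (b \<union> {e}) + rk M (?E - (b \<union> {e}))"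
    using conn_plus_rk_ground[OF M sets(4)] .
  moreover have "rk M (?E - (b \<union> {e})) \<le> rk M (?E - b)" by (rule rk_mono[OF M]) blast+
  moreover have "rk M {e} \<le> 1" using rk_le_card[OF M, of "{e}"] e by simp
  ultimately show ?thesis by linarith
qed

lemma conn_Un_singleton_le_conn_delete:
  assumes M: "matroid M" and e: "e \<in> ground M" and b: "b \<subseteq> ground M - {e}"
    and coloop_free: "rk M (ground M - {e}) = rk M (ground M)"
  shows "conn M (b \<union> {e}) \<le> conn (delete M e) b + 1"
proof -
  let ?E = "ground M"
  have be: "b \<subseteq> ?E" "b \<union> {e} \<subseteq> ?E" "?E - (b \<union> {e}) = ?E - {e} - b" using b e by blast+
  have "conn (delete M e) b + rk M (?E - {e}) = rk M b + rk M (?E - {e} - b)"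
    using conn_plus_rk_ground[OF matroid_delete[OF M], of b] b by simp
  moreover have "conn M (b \<union> {e}) + rk M ?E = rk M (b \<union> {e}) + rk M (?E - {e} - b)"
    using conn_plus_rk_ground[OF M be(2)] unfolding be(3) .
  moreover have "rk M (b \<union> {e}) \<le> rk M b + 1" by (rule rk_Un_singleton_le[OF M be(1) e])
  ultimately show ?thesis using coloop_free by linarith
qed

text \<open>Adding \<open>e\<close> to \<open>A\<close> raises \<open>r(A)\<close> by at most one and lowers \<open>r(E - A)\<close> by at
  most one, so \<open>\<lambda>\<close> can only increase if the first happens and the second does not.\<close>
lemma rk_eqs_if_conn_Un_singleton_gt:
  assumes M: "matroid M" and A: "A \<subseteq> ground M" and e: "e \<in> ground M" "e \<notin> A"
    and gt: "conn M A < conn M (A \<union> {e})"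
  shows "rk M (A \<union> {e}) = rk M A + 1" and "rk M (ground M - (A \<union> {e})) = rk M (ground M - A)"
proof -
  let ?E = "ground M"
  have Ae: "A \<union> {e} \<subseteq> ?E" using A e by blast
  have "?E - A = (?E - (A \<union> {e})) \<union> {e}" using e by blast
  then have "rk M (?E - A) \<le> rk M (?E - (A \<union> {e})) + 1"
    using rk_Un_singleton_le[OF M _ e(1), of "?E - (A \<union> {e})"] by auto
  moreover have "rk M A \<le> rk M (A \<union> {e})" by (rule rk_mono[OF M _ Ae]) blast
  moreover have "rk M (?E - (A \<union> {e})) \<le> rk M (?E - A)" by (rule rk_mono[OF M]) blast+
  moreover note rk_Un_singleton_le[OF M A e(1)]
    conn_plus_rk_ground[OF M A] conn_plus_rk_ground[OF M Ae] gt
  ultimately show "rk M (A \<union> {e}) = rk M A + 1" "rk M (?E - (A \<union> {e})) = rk M (?E - A)"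
    by linarith+
qed

text \<open>Contraction keeps \<open>M|A\<close> because \<open>e\<close> is not spanned by \<open>A\<close>; deletion loses no
  connectivity because \<open>e\<close> is not a coloop.\<close>
lemma exists_single_element_minor:
  assumes M: "matroid M" and mn: "is_minor N M" and e: "e \<in> ground M" "e \<notin> ground N"
    and A: "A \<subseteq> ground M" "e \<notin> A"
    and rA: "rk M (A \<union> {e}) = rk M A + 1"
    and rA': "rk M (ground M - (A \<union> {e})) = rk M (ground M - A)"
  obtains M1 where "matroid M1" "is_minor M1 M" "is_minor N M1" "ground M1 = ground M - {e}"
    "same_restriction M1 M A" "\<And>b. b \<subseteq> ground M1 \<Longrightarrow> conn M (b \<union> {e}) \<le> conn M1 b + 1"
proof (cases rule: is_minor_contract_or_delete[OF M mn e])
  case 1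
  show thesis
  proof (rule that[OF matroid_contract[OF M e(1)] is_minor_contract[OF e(1)] 1])
    show "same_restriction (contract M e) M A" by (rule same_restriction_contract[OF M e(1) A rA])
    show "conn M (b \<union> {e}) \<le> conn (contract M e) b + 1" if "b \<subseteq> ground (contract M e)" for b
      using conn_Un_singleton_le_conn_contract[OF M e(1)] that by simp
  qed simp
next
  case 2
  let ?E = "ground M"
  have "(?E - {e}) \<union> (?E - A) = ?E" "(?E - {e}) \<inter> (?E - A) = ?E - (A \<union> {e})" using e A by blast+
  then have "rk M ?E \<le> rk M (?E - {e})" using rk_submod[OF M, of "?E - {e}" "?E - A"] rA' by auto
  moreover have "rk M (?E - {e}) \<le> rk M ?E" by (rule rk_mono[OF M]) blast+
  ultimately have "rk M (?E - {e}) = rk M ?E" by simp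
  then have "conn M (b \<union> {e}) \<le> conn (delete M e) b + 1" if "b \<subseteq> ground (delete M e)" for b
    using conn_Un_singleton_le_conn_delete[OF M e(1)] that by simp
  then show thesis
    using that[OF matroid_delete[OF M] is_minor_delete[OF M e(1)] 2] same_restriction_delete[OF A]
    by simp
qed

subsection \<open>Tangles and \<open>\<kappa>\<close>\<close>

lemma tangle_subset_ground: "tangle N \<theta> T \<Longrightarrow> A \<in> T \<Longrightarrow> A \<subseteq> ground N"
  unfolding tangle_def separating_def by simp

lemma tangle_compl_mem:
  "tangle N \<theta> T \<Longrightarrow> separating N (\<theta> - 1) X \<Longrightarrow> X \<notin> T \<Longrightarrow> ground N - X \<in> T"
  unfolding tangle_def by blast

lemma tangle_no_cover:
  "tangle N \<theta> T \<Longrightarrow> A \<in> T \<Longrightarrow> B \<in> T \<Longrightarrow> C \<in> T \<Longrightarrow> A \<union> B \<union> C \<noteq> ground N"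
  unfolding tangle_def by simp

lemma tangle_subset_closed:
  assumes T: "tangle N \<theta> T" and A: "A \<in> T" and YA: "Y \<subseteq> A" and Y: "conn N Y < \<theta> - 1"
  shows "Y \<in> T"
proof (rule ccontr)
  assume "Y \<notin> T"
  have AN: "A \<subseteq> ground N" by (rule tangle_subset_ground[OF T A])
  then have "ground N - Y \<in> T"
    using tangle_compl_mem[OF T _ \<open>Y \<notin> T\<close>] YA Y unfolding separating_def by blast
  moreover have "A \<union> (ground N - Y) \<union> (ground N - Y) = ground N" using AN YA by blast
  ultimately show False using tangle_no_cover[OF T A] by blast
qed

lemma tangle_Un_closed:
  assumes T: "tangle N \<theta> T" and A: "A \<in> T" and B: "B \<in> T" and AB: "conn N (A \<union> B) < \<theta> - 1"
  shows "A \<union> B \<in> T"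
proof (rule ccontr)
  assume "A \<union> B \<notin> T"
  have ABN: "A \<union> B \<subseteq> ground N" using tangle_subset_ground[OF T] A B by blast
  then have "ground N - (A \<union> B) \<in> T"
    using tangle_compl_mem[OF T _ \<open>A \<union> B \<notin> T\<close>] AB unfolding separating_def by blast
  moreover have "A \<union> B \<union> (ground N - (A \<union> B)) = ground N" using ABN by blast
  ultimately show False using tangle_no_cover[OF T A B] by blast
qed

lemma finite_TkMN: "matroid M \<Longrightarrow> finite (TkMN k M N)"
  by (rule finite_subset[of _ "Pow (ground M)"]) (auto simp: TkMN_def matroid_finite_ground)

lemma kappa_le_conn:
  assumes "finite T" "Z \<in> T" "X \<subseteq> Z"
  shows "kappa M \<theta> T X \<le> conn M Z"
  using assms unfolding kappa_def by (auto intro: Min_le)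

lemma kappa_attained:
  assumes "finite T" "Z \<in> T" "X \<subseteq> Z"
  obtains Z' where "Z' \<in> T" "X \<subseteq> Z'" "conn M Z' = kappa M \<theta> T X"
proof -
  have "finite {conn M Z | Z. Z \<in> T \<and> X \<subseteq> Z}" using assms(1) by simp
  then have "Min {conn M Z | Z. Z \<in> T \<and> X \<subseteq> Z} \<in> {conn M Z | Z. Z \<in> T \<and> X \<subseteq> Z}"
    using assms(2,3) by (intro Min_in) auto
  then obtain Z' where "Z' \<in> T" "X \<subseteq> Z'" "conn M Z' = Min {conn M Z | Z. Z \<in> T \<and> X \<subseteq> Z}"
    by auto
  moreover have "kappa M \<theta> T X = Min {conn M Z | Z. Z \<in> T \<and> X \<subseteq> Z}"
    using assms(2,3) unfolding kappa_def by auto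
  ultimately show thesis by (intro that) auto
qed

lemma kappa_eqI:
  assumes "finite T" "a \<in> T" "X \<subseteq> a" "\<And>Z. Z \<in> T \<Longrightarrow> X \<subseteq> Z \<Longrightarrow> conn M a \<le> conn M Z"
  shows "kappa M \<theta> T X = conn M a"
  by (metis assms kappa_attained kappa_le_conn le_antisym)

subsection \<open>Maximal sets attaining \<open>\<kappa>\<close>\<close>

definition kappa_set :: "nat \<Rightarrow> 'a matroid \<Rightarrow> 'a matroid \<Rightarrow> 'a set \<Rightarrow> 'a set \<Rightarrow> bool" where
  "kappa_set k M N X Z \<longleftrightarrow>
     Z \<in> TkMN k M N \<and> X \<subseteq> Z \<and> conn M Z = kappa M k (TkMN k M N) X"

definition max_kappa_set :: "nat \<Rightarrow> 'a matroid \<Rightarrow> 'a matroid \<Rightarrow> 'a set \<Rightarrow> 'a set \<Rightarrow> bool" where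
  "max_kappa_set k M N X Z \<longleftrightarrow>
     kappa_set k M N X Z \<and> (\<forall>Z'. kappa_set k M N X Z' \<longrightarrow> card Z' \<le> card Z)"

lemma exists_max_kappa_set:
  assumes M: "matroid M" and Z: "Z \<in> TkMN k M N" "X \<subseteq> Z"
  obtains a where "max_kappa_set k M N X a"
proof -
  obtain Z' where "kappa_set k M N X Z'"
    using kappa_attained[OF finite_TkMN[OF M] Z] unfolding kappa_set_def by blast
  moreover have "card Z' < Suc (card (ground M))" if "kappa_set k M N X Z'" for Z'
    using that card_mono[OF matroid_finite_ground[OF M]]
    by (auto simp: kappa_set_def TkMN_def less_Suc_eq_le)
  ultimately show thesis
    using ex_has_greatest_nat[of "kappa_set k M N X" _ card] that
    unfolding max_kappa_set_def by blast
qed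

text \<open>Uncrossing: with \<open>K = \<kappa>(X)\<close>, submodularity gives \<open>\<lambda>(a \<union> B) + \<lambda>(a \<inter> B) \<le> 2K\<close>,
  and \<open>a \<inter> B\<close> is small, so \<open>\<lambda>(a \<inter> B) \<ge> K\<close>. Hence \<open>a \<union> B\<close> is small and attains \<open>K\<close>,
  and maximality of \<open>a\<close> forces \<open>B \<subseteq> a\<close>.\<close>
lemma max_kappa_set_absorbs:
  assumes tg: "tangle N k (Tk k N)" and M: "matroid M" and mn: "is_minor N M"
    and a: "max_kappa_set k M N X a"
    and B: "B \<subseteq> ground M" "X \<subseteq> B" "B \<inter> ground N \<in> Tk k N" "conn M B \<le> conn M a"
  shows "B \<subseteq> a"
proof -
  let ?T = "TkMN k M N"
  have aT: "a \<in> ?T" and Xa: "X \<subseteq> a" and Ka: "conn M a = kappa M k ?T X"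
    and amax: "\<And>Z. kappa_set k M N X Z \<Longrightarrow> card Z \<le> card a"
    using a unfolding max_kappa_set_def kappa_set_def by auto
  have aE: "a \<subseteq> ground M" and ak: "conn M a < k - 1" and aN: "a \<inter> ground N \<in> Tk k N"
    using aT unfolding TkMN_def by auto
  have small: "Z \<in> ?T" if "Z \<subseteq> ground M" "conn M Z \<le> conn M a" "Z \<inter> ground N \<in> Tk k N" for Z
    using that ak unfolding TkMN_def by simp
  have above_kappa: "conn M a \<le> conn M Z" if "Z \<in> ?T" "X \<subseteq> Z" for Z
    unfolding Ka by (rule kappa_le_conn[OF finite_TkMN[OF M] that])
  have "conn M a \<le> conn M (a \<inter> B)"
  proof (rule ccontr)
    assume "\<not> conn M a \<le> conn M (a \<inter> B)"
    then have lt: "conn M (a \<inter> B) < conn M a" by simp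
    have aBE: "a \<inter> B \<subseteq> ground M" using aE by blast
    have "conn N ((a \<inter> B) \<inter> ground N) < k - 1"
      using conn_minor_le[OF M mn aBE] lt ak by linarith
    then have "(a \<inter> B) \<inter> ground N \<in> Tk k N"
      by (rule tangle_subset_closed[OF tg aN, rotated]) blast
    then have "a \<inter> B \<in> ?T" using small[OF aBE] lt by simp
    then show False using above_kappa[of "a \<inter> B"] Xa B(2) lt by simp
  qed
  then have aB: "conn M (a \<union> B) \<le> conn M a" using conn_submod[OF M aE B(1)] B(4) by linarith
  have aBE: "a \<union> B \<subseteq> ground M" using aE B(1) by blast
  have aBN: "(a \<union> B) \<inter> ground N = (a \<inter> ground N) \<union> (B \<inter> ground N)" by blast
  have "conn N ((a \<union> B) \<inter> ground N) < k - 1"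
    using conn_minor_le[OF M mn aBE] aB ak by linarith
  then have "(a \<union> B) \<inter> ground N \<in> Tk k N"
    unfolding aBN by (rule tangle_Un_closed[OF tg aN B(3)])
  then have "a \<union> B \<in> ?T" by (rule small[OF aBE aB])
  moreover have "X \<subseteq> a \<union> B" using Xa by blast
  ultimately have "kappa_set k M N X (a \<union> B)"
    using above_kappa aB Ka unfolding kappa_set_def by (simp add: le_antisym)
  then have "card (a \<union> B) \<le> card a" by (rule amax)
  moreover have "finite (a \<union> B)" using aBE matroid_finite_ground[OF M] by (rule finite_subset)
  ultimately have "a = a \<union> B" by (intro card_seteq) auto
  then show "B \<subseteq> a" by blast
qed

text \<open>Maximality of \<open>a\<close> makes \<open>\<lambda>(a \<union> {e}) > \<lambda>(a)\<close>, and a small set \<open>b\<close> of the minor with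
  \<open>\<lambda>(b) < \<kappa>(X)\<close> would give the small set \<open>b \<union> {e} \<not>\<subseteq> a\<close> of \<open>M\<close> with
  \<open>\<lambda>(b \<union> {e}) \<le> \<kappa>(X)\<close>.\<close>
lemma kappa_preserving_single_element_minor:
  assumes tg: "tangle N k (Tk k N)" and M: "matroid M" and mn: "is_minor N M"
    and a: "max_kappa_set k M N X a"
    and e: "e \<in> ground M" "e \<notin> ground N" "e \<notin> a"
  obtains M1 where "matroid M1" "is_minor M1 M" "is_minor N M1" "ground M1 = ground M - {e}"
    "same_restriction M1 M X" "a \<in> TkMN k M1 N"
    "kappa M1 k (TkMN k M1 N) X = kappa M k (TkMN k M N) X"
proof -
  have aT: "a \<in> TkMN k M N" and Xa: "X \<subseteq> a" and Ka: "conn M a = kappa M k (TkMN k M N) X"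
    using a unfolding max_kappa_set_def kappa_set_def by auto
  have aE: "a \<subseteq> ground M" and ak: "conn M a < k - 1" and aN: "a \<inter> ground N \<in> Tk k N"
    using aT unfolding TkMN_def by auto
  have not_absorbed: "conn M a < conn M (Z \<union> {e})"
    if "Z \<subseteq> ground M" "X \<subseteq> Z" "Z \<inter> ground N \<in> Tk k N" for Z
  proof (rule ccontr)
    assume "\<not> conn M a < conn M (Z \<union> {e})"
    moreover have "(Z \<union> {e}) \<inter> ground N = Z \<inter> ground N" using e(2) by blast
    ultimately have "Z \<union> {e} \<subseteq> a"
      using max_kappa_set_absorbs[OF tg M mn a, of "Z \<union> {e}"] that e(1) by auto
    then show False using e(3) by blast
  qed
  have gt: "conn M a < conn M (a \<union> {e})" by (rule not_absorbed[OF aE Xa aN])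
  obtain M1 where M1: "matroid M1" "is_minor M1 M" "is_minor N M1"
    and g1: "ground M1 = ground M - {e}" and sr: "same_restriction M1 M a"
    and conn_e: "\<And>b. b \<subseteq> ground M1 \<Longrightarrow> conn M (b \<union> {e}) \<le> conn M1 b + 1"
    using exists_single_element_minor[OF M mn e(1,2) aE e(3)
        rk_eqs_if_conn_Un_singleton_gt[OF M aE e(1,3) gt]] by blast
  have aE1: "a \<subseteq> ground M1" using aE e(3) g1 by blast
  have a_le: "conn M1 a \<le> conn M a"
    using conn_minor_le[OF M M1(2) aE] aE1 by (simp add: Int_absorb2)
  then have aT1: "a \<in> TkMN k M1 N" using aE1 ak aN unfolding TkMN_def by simp
  have lower: "conn M a \<le> conn M1 b" if "b \<in> TkMN k M1 N" "X \<subseteq> b" for b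
  proof -
    have b: "b \<subseteq> ground M1" "b \<inter> ground N \<in> Tk k N" using that(1) unfolding TkMN_def by auto
    then have "b \<subseteq> ground M" using g1 by blast
    then show ?thesis using not_absorbed[OF _ that(2) b(2)] conn_e[OF b(1)] by linarith
  qed
  have "kappa M1 k (TkMN k M1 N) X = conn M1 a"
    by (rule kappa_eqI[OF finite_TkMN[OF M1(1)] aT1 Xa]) (use lower a_le in force)
  also have "\<dots> = kappa M k (TkMN k M N) X"
    using lower[OF aT1 Xa] a_le Ka by simp
  finally show thesis
    using that[OF M1 g1 same_restriction_subset[OF sr Xa] aT1] by simp
qed

lemma kappa_set_covers_or_smaller_minor:
  assumes tg: "tangle N k (Tk k N)" and M: "matroid M" and mn: "is_minor N M"
    and Z: "Z \<in> TkMN k M N" "X \<subseteq> Z"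
  obtains (covers) a where "kappa_set k M N X a" "ground M = ground N \<union> a"
  | (smaller) M1 a where "matroid M1" "is_minor M1 M" "is_minor N M1"
      "card (ground M1) < card (ground M)" "same_restriction M1 M X" "a \<in> TkMN k M1 N" "X \<subseteq> a"
      "kappa M1 k (TkMN k M1 N) X = kappa M k (TkMN k M N) X"
proof -
  obtain a where a: "max_kappa_set k M N X a" using exists_max_kappa_set[OF M Z] .
  then have a': "kappa_set k M N X a" and Xa: "X \<subseteq> a" unfolding max_kappa_set_def kappa_set_def by auto
  show thesis
  proof (cases "ground M \<subseteq> ground N \<union> a")
    case True
    then have "ground M = ground N \<union> a"
      using ground_minor_subset[OF mn] a' unfolding kappa_set_def TkMN_def by blast
    then show thesis by (rule covers[OF a'])
  next
    case False
    then obtain e where e: "e \<in> ground M" "e \<notin> ground N" "e \<notin> a" by blast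
    obtain M1 where M1: "matroid M1" "is_minor M1 M" "is_minor N M1" "ground M1 = ground M - {e}"
      "same_restriction M1 M X" "a \<in> TkMN k M1 N"
      "kappa M1 k (TkMN k M1 N) X = kappa M k (TkMN k M N) X"
      using kappa_preserving_single_element_minor[OF tg M mn a e] .
    have "card (ground M1) < card (ground M)"
      unfolding M1(4) by (rule card_Diff1_less[OF matroid_finite_ground[OF M] e(1)])
    then show thesis using smaller M1 Xa by blast
  qed
qed

theorem lemma6p4:
  fixes k :: nat and M N :: "'a matroid" and X :: "'a set"
  assumes "k \<ge> 1"
    and "matroid M" and "matroid N" and "is_minor N M"
    and "tangle N k (Tk k N)"
    and "X \<subseteq> ground M"
    and "\<exists>Z\<in>TkMN k M N. X \<subseteq> Z"
  shows "\<exists>M'. matroid M' \<and> is_minor M' M \<and> same_restriction M' M X \<and> is_minor N M'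
     \<and> (\<exists>X'. X' \<in> TkMN k M' N \<and> X \<subseteq> X' \<and> ground M' = ground N \<union> X'
          \<and> conn M' X' = kappa M' k (TkMN k M' N) X
          \<and> kappa M' k (TkMN k M' N) X = kappa M k (TkMN k M N) X)"
  using assms(2,4,6,7)
proof (induction "card (ground M)" arbitrary: M rule: less_induct)
  case less
  then obtain Z where Z: "Z \<in> TkMN k M N" "X \<subseteq> Z" by blast
  show ?case
  proof (cases rule: kappa_set_covers_or_smaller_minor[OF assms(5) less.prems(1,2) Z,
        case_names covers smaller])
    case (covers a)
    then have "a \<in> TkMN k M N" "X \<subseteq> a" "conn M a = kappa M k (TkMN k M N) X"
      unfolding kappa_set_def by auto
    then show ?thesis
      using less.prems(1,2) is_minor_refl[OF less.prems(1)] same_restriction_refl[OF less.prems(3)]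
        covers(2) by blast
  next
    case (smaller M1 a)
    then have "X \<subseteq> ground M1" unfolding TkMN_def by blast
    then obtain M' where "matroid M'" "is_minor M' M1" "same_restriction M' M1 X" "is_minor N M'"
      "\<exists>X'. X' \<in> TkMN k M' N \<and> X \<subseteq> X' \<and> ground M' = ground N \<union> X'
          \<and> conn M' X' = kappa M' k (TkMN k M' N) X
          \<and> kappa M' k (TkMN k M' N) X = kappa M1 k (TkMN k M1 N) X"
      using less.hyps[OF smaller(4,1,3)] smaller(6,7) by blast
    then show ?thesis
      using is_minor_trans[OF less.prems(1) smaller(2)] same_restriction_trans[OF _ smaller(5)]
        smaller(8) by metis
  qed
qed

end
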